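(* Let $(X,d)$ be a nonempty complete and rectifiably path-connected metric space and let $F:X\rightarrow K(X)$ be a set-valued uniform pointwise contraction with modulus $\beta\in[0,1)$. Then $\mathrm{Fix}(F)\neq\varnothing$.
   Context: $\Pi$ is the set of finite partitions $0=t_0<\cdots<t_n=1$ of $[0,1]$; the length of a continuous path $p:[0,1]\to X$ is $l(p)=\sup_{\pi\in\Pi}\sum_{i=1}^n d(p(t_{i-1}),p(t_i))$. $X$ is rectifiably path-connected if every two points $x,y$ are joined by a continuous path $p$ with $p(0)=x$, $p(1)=y$, $l(p)<\infty$. $K(X)$ is the set of nonempty compact subsets of $X$; $H$ is the Hausdorff distance. $F$ is a set-valued uniform pointwise contraction with modulus $\beta$ if every $x\in X$ has an open neighborhood $N(x)$ with $H(F(x),F(y))\le\beta\, d(x,y)$ for all $y\in N(x)$. $\mathrm{Fix}(F)=\{x:x\in F(x)\}$. *)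

theory Defs
  imports "HOL-Analysis.Analysis"
begin

definition is_partition :: "(nat \<Rightarrow> real) \<Rightarrow> nat \<Rightarrow> bool" where
  "is_partition t n \<longleftrightarrow> t 0 = 0 \<and> t n = 1 \<and> (\<forall>i<n. t i < t (Suc i))"

definition variation_sums :: "(real \<Rightarrow> 'a::metric_space) \<Rightarrow> real set" where
  "variation_sums p = {(\<Sum>i\<in>{1..n}. dist (p (t (i - 1))) (p (t i))) | t n. is_partition t n}"

definition path_length :: "(real \<Rightarrow> 'a::metric_space) \<Rightarrow> ereal" where
  "path_length p = (SUP s\<in>variation_sums p. ereal s)"

definition rectifiably_path_connected :: "'a::metric_space set \<Rightarrow> bool" where
  "rectifiably_path_connected X \<longleftrightarrow>
     (\<forall>x\<in>X. \<forall>y\<in>X. \<exists>p. continuous_on {0..1} p \<and> p ` {0..1} \<subseteq> X \<and>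
        p 0 = x \<and> p 1 = y \<and> path_length p < \<infinity>)"

text \<open>Hausdorff distance (used on nonempty compact sets).\<close>
definition hausdorff_dist :: "'a::metric_space set \<Rightarrow> 'a set \<Rightarrow> real" where
  "hausdorff_dist A B = max (SUP a\<in>A. infdist a B) (SUP b\<in>B. infdist b A)"

definition uniform_pointwise_contraction ::
  "'a::metric_space set \<Rightarrow> ('a \<Rightarrow> 'a set) \<Rightarrow> real \<Rightarrow> bool" where
  "uniform_pointwise_contraction X F \<beta> \<longleftrightarrow>
     (\<forall>x\<in>X. \<exists>N. openin (top_of_set X) N \<and> x \<in> N \<and>
        (\<forall>y\<in>N. hausdorff_dist (F x) (F y) \<le> \<beta> * dist x y))"

end

theory Submission
  imports Defs
begin

(* Let p be a rectifiable path from a point x0 to a point of F x0, and let w(a,b) be the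
   variation of p on [a,b]: it is superadditive, tends to 0 at the diagonal, and bounds
   dist (p a) (p b). If dist (g a) (g b) <= c w(a,b) for a path g, the local contractivity
   of F, propagated along [0,1] by superadditivity, gives H(F (g a), F (g b)) <= beta c w(a,b).
   A greedy choice on finite subsets of [0,1], made global by Tychonoff's theorem for the
   compact values, then yields a selection g' of F o g through any prescribed point of
   F (g 0) with dist (g' a) (g' b) <= beta c w(a,b). Iterating from p, each path starting
   where the previous one ends, the starting points x_n satisfy x_(n+1) in F x_n and
   dist x_n x_(n+1) <= beta^n w(0,1). They form a Cauchy sequence, and its limit is a fixed
   point because F is a contraction near the limit. *)

section \<open>Hausdorff distance of compact sets\<close>

lemma hausdorff_dist_commute: "hausdorff_dist A B = hausdorff_dist B A"
  unfolding hausdorff_dist_def by (simp add: max.commute)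

lemma infdist_le_hausdorff_dist:
  fixes A B :: "'a::metric_space set"
  assumes "compact A" "a \<in> A"
  shows "infdist a B \<le> hausdorff_dist A B"
proof -
  have "bounded ((\<lambda>a. infdist a B) ` A)"
    by (intro compact_imp_bounded compact_continuous_image continuous_intros assms)
  then have "infdist a B \<le> (SUP a\<in>A. infdist a B)"
    using assms by (intro cSUP_upper bounded_imp_bdd_above) auto
  then show ?thesis unfolding hausdorff_dist_def by linarith
qed

lemma hausdorff_dist_nearest_point:
  fixes A B :: "'a::metric_space set"
  assumes "compact A" "compact B" "B \<noteq> {}" "a \<in> A"
  obtains b where "b \<in> B" "dist a b \<le> hausdorff_dist A B"
proof -
  obtain b where "b \<in> B" and b: "\<forall>y\<in>B. dist a b \<le> dist a y"
    using continuous_attains_inf[OF assms(2,3) continuous_on_dist[OF continuous_on_const continuous_on_id]]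
    by blast
  then have "dist a b \<le> infdist a B"
    unfolding infdist_notempty[OF assms(3)] by (auto intro!: cINF_greatest assms(3))
  then show ?thesis
    using that[OF \<open>b \<in> B\<close>] infdist_le_hausdorff_dist[OF assms(1,4), of B] order_trans by blast
qed

lemma hausdorff_dist_triangle:
  fixes A B C :: "'a::metric_space set"
  assumes "compact A" "compact B" "compact C" "A \<noteq> {}" "B \<noteq> {}" "C \<noteq> {}"
  shows "hausdorff_dist A C \<le> hausdorff_dist A B + hausdorff_dist B C"
proof -
  have SUP_le: "(SUP x\<in>X. infdist x Z) \<le> hausdorff_dist X Y + hausdorff_dist Y Z"
    if XY: "compact X" "compact Y" "X \<noteq> {}" "Y \<noteq> {}" for X Y Z :: "'a set"
  proof (rule cSUP_least)
    fix x assume "x \<in> X"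
    then obtain y where "y \<in> Y" "dist x y \<le> hausdorff_dist X Y"
      using hausdorff_dist_nearest_point[OF XY(1,2,4)] by blast
    moreover have "infdist y Z \<le> hausdorff_dist Y Z"
      using infdist_le_hausdorff_dist \<open>y \<in> Y\<close> XY by blast
    ultimately show "infdist x Z \<le> hausdorff_dist X Y + hausdorff_dist Y Z"
      using infdist_triangle[of x Z y] by linarith
  qed (use XY in auto)
  show ?thesis
    using SUP_le[of A B C] SUP_le[of C B A] assms
    unfolding hausdorff_dist_def[of A C] by (simp add: hausdorff_dist_commute add.commute)
qed

section \<open>Selections with prescribed distance bounds\<close>

(* Points are added in increasing order, each one close to the image of its predecessor;
   superadditivity of K then takes care of all earlier points. *)
lemma finite_ordered_selection:
  fixes G :: "'i::linorder \<Rightarrow> 'a::metric_space set"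
  assumes nonempty: "\<And>i. i \<in> I \<Longrightarrow> G i \<noteq> {}"
    and approx: "\<And>i j x. i \<in> I \<Longrightarrow> j \<in> I \<Longrightarrow> i \<le> j \<Longrightarrow> x \<in> G i \<Longrightarrow> \<exists>y\<in>G j. dist x y \<le> K i j"
    and superadd: "\<And>i j k. i \<in> I \<Longrightarrow> j \<in> I \<Longrightarrow> k \<in> I \<Longrightarrow> i \<le> j \<Longrightarrow> j \<le> k \<Longrightarrow>
      K i j + K j k \<le> K i k"
    and "finite S" "S \<subseteq> I"
  shows "\<exists>f. (\<forall>i\<in>S. f i \<in> G i) \<and> (\<forall>i\<in>S. \<forall>j\<in>S. i \<le> j \<longrightarrow> dist (f i) (f j) \<le> K i j)"
  using \<open>finite S\<close> \<open>S \<subseteq> I\<close>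
proof (induction S rule: finite_linorder_max_induct)
  case empty
  show ?case by simp
next
  case (insert b A)
  then obtain f where f: "\<forall>i\<in>A. f i \<in> G i" "\<forall>i\<in>A. \<forall>j\<in>A. i \<le> j \<longrightarrow> dist (f i) (f j) \<le> K i j"
    by auto
  have "b \<in> I" "A \<subseteq> I"
    using insert.prems by auto
  have "0 \<le> K b b"
    using nonempty[OF \<open>b \<in> I\<close>] approx[OF \<open>b \<in> I\<close> \<open>b \<in> I\<close>] by (force intro: order_trans[OF zero_le_dist])
  obtain z where z: "z \<in> G b" "\<forall>a\<in>A. dist (f a) z \<le> K a b"
  proof (cases "A = {}")
    case True
    then show ?thesis
      using that nonempty[OF \<open>b \<in> I\<close>] by blast
  next
    case False
    define a0 where "a0 = Max A"
    have "a0 \<in> A" "\<forall>a\<in>A. a \<le> a0"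
      using False insert.hyps(1) by (simp_all add: a0_def)
    then obtain z where "z \<in> G b" "dist (f a0) z \<le> K a0 b"
      using approx[of a0 b "f a0"] f(1) insert.hyps(2) \<open>b \<in> I\<close> \<open>A \<subseteq> I\<close> by force
    moreover have "dist (f a) z \<le> K a b" if "a \<in> A" for a
    proof -
      have "dist (f a) z \<le> dist (f a) (f a0) + dist (f a0) z"
        by (rule dist_triangle)
      also have "\<dots> \<le> K a a0 + K a0 b"
        using f(2) \<open>a \<in> A\<close> \<open>a0 \<in> A\<close> \<open>\<forall>a\<in>A. a \<le> a0\<close> \<open>dist (f a0) z \<le> K a0 b\<close> by force
      also have "\<dots> \<le> K a b"
        using superadd[of a a0 b] that \<open>a0 \<in> A\<close> \<open>\<forall>a\<in>A. a \<le> a0\<close> insert.hyps(2) \<open>b \<in> I\<close> \<open>A \<subseteq> I\<close>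
        by force
      finally show ?thesis .
    qed
    ultimately show ?thesis
      using that by blast
  qed
  have "b \<notin> A"
    using insert.hyps(2) by blast
  then show ?case
    using f z \<open>0 \<le> K b b\<close> insert.hyps(2)
    by (intro exI[of _ "f(b := z)"]) (auto simp: dist_commute less_le_not_le)
qed

lemma PiE_satisfying_finitely_many_constraints:
  fixes G :: "'i \<Rightarrow> 'a::metric_space set"
  assumes finite_selection: "\<And>S. finite S \<Longrightarrow> S \<subseteq> I \<Longrightarrow>
      \<exists>f. (\<forall>i\<in>S. f i \<in> G i) \<and> (\<forall>i\<in>S. \<forall>j\<in>S. R i j \<longrightarrow> dist (f i) (f j) \<le> K i j)"
    and "finite J" "J \<subseteq> {(i, j). i \<in> I \<and> j \<in> I \<and> R i j}"
  obtains g where "g \<in> (\<Pi>\<^sub>E i\<in>I. G i)" "\<And>i j. (i, j) \<in> J \<Longrightarrow> dist (g i) (g j) \<le> K i j"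
proof -
  define S where "S = fst ` J \<union> snd ` J"
  have "finite S" "S \<subseteq> I"
    using assms(2,3) by (auto simp: S_def)
  then obtain f where f: "\<forall>i\<in>S. f i \<in> G i" "\<forall>i\<in>S. \<forall>j\<in>S. R i j \<longrightarrow> dist (f i) (f j) \<le> K i j"
    using finite_selection[OF \<open>finite S\<close> \<open>S \<subseteq> I\<close>] by blast
  define g where "g i = (if i \<in> S then f i else if i \<in> I then (SOME x. x \<in> G i) else undefined)" for i
  have "G i \<noteq> {}" if "i \<in> I" for i
    using finite_selection[of "{i}"] that by blast
  then have "g i \<in> G i" if "i \<in> I" for i
    using f(1) that by (auto simp: g_def some_in_eq)
  moreover have "g i = undefined" if "i \<notin> I" for i
    using that \<open>S \<subseteq> I\<close> by (auto simp: g_def)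
  ultimately have "g \<in> (\<Pi>\<^sub>E i\<in>I. G i)"
    by (simp add: PiE_iff extensional_def)
  moreover have "dist (g i) (g j) \<le> K i j" if "(i, j) \<in> J" for i j
  proof -
    have "i \<in> S" "j \<in> S" "R i j"
      using that assms(3) by (auto simp: S_def rev_image_eqI)
    then show ?thesis
      using f(2) by (simp add: g_def)
  qed
  ultimately show ?thesis
    using that by blast
qed

lemma closedin_product_topology_dist_le:
  fixes G :: "'i \<Rightarrow> 'a::metric_space set"
  assumes "i \<in> I" "j \<in> I"
  shows "closedin (product_topology (\<lambda>i. top_of_set (G i)) I)
    {f \<in> (\<Pi>\<^sub>E i\<in>I. G i). dist (f i) (f j) \<le> c}"
proof -
  let ?X = "product_topology (\<lambda>i. top_of_set (G i)) I"
  have "continuous_map ?X euclidean (\<lambda>f. f k)" if "k \<in> I" for k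
    by (rule continuous_map_into_fulltopology[OF continuous_map_product_projection[OF that]])
  then have "continuous_map ?X euclidean (\<lambda>f. dist (f i) (f j))"
    using continuous_map_mdist[of ?X euclidean_metric "\<lambda>f. f i" "\<lambda>f. f j"] assms by simp
  then show ?thesis
    using closedin_continuous_map_preimage[of ?X euclidean _ "{..c}"] by simp
qed

(* Tychonoff: the distance constraints are closed in the compact product of the values and
   have the finite intersection property. *)
lemma selection_by_compactness:
  fixes G :: "'i \<Rightarrow> 'a::metric_space set"
  assumes compact: "\<And>i. i \<in> I \<Longrightarrow> compact (G i)"
    and finite_selection: "\<And>S. finite S \<Longrightarrow> S \<subseteq> I \<Longrightarrow>
      \<exists>f. (\<forall>i\<in>S. f i \<in> G i) \<and> (\<forall>i\<in>S. \<forall>j\<in>S. R i j \<longrightarrow> dist (f i) (f j) \<le> K i j)"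
  obtains f where "\<forall>i\<in>I. f i \<in> G i" "\<forall>i\<in>I. \<forall>j\<in>I. R i j \<longrightarrow> dist (f i) (f j) \<le> K i j"
proof -
  define X where "X = product_topology (\<lambda>i. top_of_set (G i)) I"
  define J where "J = {(i, j). i \<in> I \<and> j \<in> I \<and> R i j}"
  define C where "C = (\<lambda>(i, j). {f \<in> (\<Pi>\<^sub>E i\<in>I. G i). dist (f i) (f j) \<le> K i j})"
  have topspace: "topspace X = (\<Pi>\<^sub>E i\<in>I. G i)"
    by (simp add: X_def)
  have "compact_space X"
    unfolding X_def compact_space_product_topology using compact by (auto intro!: compact_space_subtopology)
  have "\<forall>D\<in>insert (topspace X) (C ` J). closedin X D"
  proof
    fix D assume "D \<in> insert (topspace X) (C ` J)"
    then consider "D = topspace X" | i j where "(i, j) \<in> J" "D = C (i, j)"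
      by fast
    then show "closedin X D"
    proof cases
      case (2 i j)
      then have "i \<in> I" "j \<in> I"
        by (simp_all add: J_def)
      then show ?thesis
        unfolding X_def \<open>D = C (i, j)\<close> C_def by (simp add: closedin_product_topology_dist_le)
    qed simp
  qed
  moreover have "\<forall>\<F>. finite \<F> \<and> \<F> \<subseteq> insert (topspace X) (C ` J) \<longrightarrow> \<Inter>\<F> \<noteq> {}"
  proof (intro allI impI, elim conjE)
    fix \<F> assume \<F>: "finite \<F>" "\<F> \<subseteq> insert (topspace X) (C ` J)"
    have "finite (\<F> - {topspace X})" "\<F> - {topspace X} \<subseteq> C ` J"
      using \<F> by blast+
    then have "\<exists>J'\<subseteq>J. finite J' \<and> \<F> - {topspace X} = C ` J'"
      by (rule finite_subset_image)
    then obtain J' where J': "J' \<subseteq> J" "finite J'" "\<F> - {topspace X} = C ` J'"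
      by blast
    have "finite J'" "J' \<subseteq> {(i, j). i \<in> I \<and> j \<in> I \<and> R i j}"
      using J'(1,2) by (simp_all add: J_def)
    then obtain g where g: "g \<in> (\<Pi>\<^sub>E i\<in>I. G i)" "\<And>i j. (i, j) \<in> J' \<Longrightarrow> dist (g i) (g j) \<le> K i j"
      using PiE_satisfying_finitely_many_constraints[OF finite_selection] by blast
    have "g \<in> D" if "D \<in> \<F>" for D
    proof (cases "D = topspace X")
      case False
      then obtain ij where "ij \<in> J'" "D = C ij"
        using J'(3) \<open>D \<in> \<F>\<close> by blast
      then show ?thesis
        using g(1) g(2)[of "fst ij" "snd ij"] by (simp add: C_def split_beta)
    qed (use g(1) topspace in simp)
    then show "\<Inter>\<F> \<noteq> {}"
      by blast
  qed
  ultimately have "\<Inter>(insert (topspace X) (C ` J)) \<noteq> {}"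
    by (rule compact_space_fip[THEN iffD1, OF \<open>compact_space X\<close>, rule_format, OF conjI])
  then obtain f where "f \<in> \<Inter>(insert (topspace X) (C ` J))"
    by (meson ex_in_conv)
  then have f: "f \<in> (\<Pi>\<^sub>E i\<in>I. G i)" "\<And>ij. ij \<in> J \<Longrightarrow> f \<in> C ij"
    unfolding topspace by simp_all
  show ?thesis
  proof
    show "\<forall>i\<in>I. f i \<in> G i"
      using f(1) by (simp add: PiE_iff)
    show "\<forall>i\<in>I. \<forall>j\<in>I. R i j \<longrightarrow> dist (f i) (f j) \<le> K i j"
    proof (intro ballI impI)
      fix i j assume "i \<in> I" "j \<in> I" "R i j"
      then show "dist (f i) (f j) \<le> K i j"
        using f(2)[of "(i, j)"] by (simp add: C_def J_def)
    qed
  qed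
qed

lemma ordered_selection_through:
  fixes G :: "'i::linorder \<Rightarrow> 'a::metric_space set"
  assumes G: "\<And>i. i \<in> I \<Longrightarrow> G i \<noteq> {} \<and> compact (G i)"
    and approx: "\<And>i j x. i \<in> I \<Longrightarrow> j \<in> I \<Longrightarrow> i \<le> j \<Longrightarrow> x \<in> G i \<Longrightarrow> \<exists>y\<in>G j. dist x y \<le> K i j"
    and superadd: "\<And>i j k. i \<in> I \<Longrightarrow> j \<in> I \<Longrightarrow> k \<in> I \<Longrightarrow> i \<le> j \<Longrightarrow> j \<le> k \<Longrightarrow>
      K i j + K j k \<le> K i k"
    and "i\<^sub>0 \<in> I" "\<forall>i\<in>I. i\<^sub>0 \<le> i" "u \<in> G i\<^sub>0"
  obtains f where "f i\<^sub>0 = u" "\<forall>i\<in>I. f i \<in> G i" "\<forall>i\<in>I. \<forall>j\<in>I. i \<le> j \<longrightarrow> dist (f i) (f j) \<le> K i j"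
proof -
  define G' where "G' = G(i\<^sub>0 := {u})"
  have G': "G' i \<noteq> {}" "compact (G' i)" "G' i \<subseteq> G i" if "i \<in> I" for i
    using G[OF that] \<open>u \<in> G i\<^sub>0\<close> by (auto simp: G'_def)
  have approx': "\<exists>y\<in>G' j. dist x y \<le> K i j"
    if ij: "i \<in> I" "j \<in> I" "i \<le> j" and "x \<in> G' i" for i j x
  proof (cases "j = i\<^sub>0")
    case True
    have "i\<^sub>0 \<le> i"
      using \<open>\<forall>i\<in>I. i\<^sub>0 \<le> i\<close> ij(1) by blast
    then have "i = i\<^sub>0"
      using ij(3) True by simp
    then have "x = u"
      using \<open>x \<in> G' i\<close> by (simp add: G'_def)
    obtain y where "dist u y \<le> K i\<^sub>0 i\<^sub>0"
      using approx[OF \<open>i\<^sub>0 \<in> I\<close> \<open>i\<^sub>0 \<in> I\<close> order_refl \<open>u \<in> G i\<^sub>0\<close>] by blast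
    then have "0 \<le> K i\<^sub>0 i\<^sub>0"
      by (meson order_trans zero_le_dist)
    then show ?thesis
      using True \<open>i = i\<^sub>0\<close> \<open>x = u\<close> by (simp add: G'_def)
  next
    case False
    have "x \<in> G i"
      using G'(3)[OF ij(1)] \<open>x \<in> G' i\<close> by blast
    then obtain y where "y \<in> G j" "dist x y \<le> K i j"
      using approx[OF ij] by blast
    then show ?thesis
      using False by (intro bexI[of _ y]) (simp_all add: G'_def)
  qed
  have finite_selection: "\<exists>f. (\<forall>i\<in>S. f i \<in> G' i) \<and> (\<forall>i\<in>S. \<forall>j\<in>S. i \<le> j \<longrightarrow> dist (f i) (f j) \<le> K i j)"
    if "finite S" "S \<subseteq> I" for S
    using G'(1) approx' superadd that by (intro finite_ordered_selection[of I]) auto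
  obtain f where f: "\<forall>i\<in>I. f i \<in> G' i" "\<forall>i\<in>I. \<forall>j\<in>I. i \<le> j \<longrightarrow> dist (f i) (f j) \<le> K i j"
    using selection_by_compactness[of I G' "(\<le>)" K, OF G'(2) finite_selection] by blast
  show ?thesis
  proof
    show "f i\<^sub>0 = u"
      using f(1)[rule_format, OF \<open>i\<^sub>0 \<in> I\<close>] by (simp add: G'_def)
    show "\<forall>i\<in>I. f i \<in> G i"
      using f(1) G'(3) by blast
    show "\<forall>i\<in>I. \<forall>j\<in>I. i \<le> j \<longrightarrow> dist (f i) (f j) \<le> K i j"
      by (rule f(2))
  qed
qed

section \<open>Control functions and lifting of paths\<close>

lemma unit_interval_induction:
  fixes P :: "real \<Rightarrow> real \<Rightarrow> bool"
  assumes trans: "\<And>a b c. 0 \<le> a \<Longrightarrow> a \<le> b \<Longrightarrow> b \<le> c \<Longrightarrow> c \<le> 1 \<Longrightarrow> P a b \<Longrightarrow> P b c \<Longrightarrow> P a c"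
    and local: "\<And>s. 0 \<le> s \<Longrightarrow> s \<le> 1 \<Longrightarrow> \<exists>\<delta>>0. \<forall>a b.
        0 \<le> a \<longrightarrow> a \<le> s \<longrightarrow> s \<le> b \<longrightarrow> b \<le> 1 \<longrightarrow> s - a < \<delta> \<longrightarrow> b - s < \<delta> \<longrightarrow> P a b"
    and ab: "0 \<le> a" "a \<le> b" "b \<le> 1"
  shows "P a b"
proof -
  \<comment> \<open>The supremum of the \<open>c \<in> [a, b]\<close> with \<open>P a c\<close> is attained and equals \<open>b\<close>.\<close>
  define T where "T = {c. a \<le> c \<and> c \<le> b \<and> P a c}"
  define m where "m = Sup T"
  have "P a a"
    using local[of a] ab by force
  then have "a \<in> T"
    using ab by (simp add: T_def)
  have bdd: "bdd_above T"
    by (auto simp: T_def intro: bdd_aboveI[of _ b])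
  have m: "a \<le> m" "m \<le> b"
    unfolding m_def using \<open>a \<in> T\<close> bdd by (auto intro: cSup_upper cSup_least simp: T_def)
  obtain \<delta> where "\<delta> > 0" and \<delta>: "\<And>a' b'. 0 \<le> a' \<Longrightarrow> a' \<le> m \<Longrightarrow> m \<le> b' \<Longrightarrow> b' \<le> 1 \<Longrightarrow>
      m - a' < \<delta> \<Longrightarrow> b' - m < \<delta> \<Longrightarrow> P a' b'"
    using local[of m] m ab by force
  obtain c0 where "c0 \<in> T" "m - \<delta> < c0"
    using less_cSupD[of T "m - \<delta>"] \<open>a \<in> T\<close> \<open>\<delta> > 0\<close> unfolding m_def by force
  have "c0 \<le> m"
    unfolding m_def using \<open>c0 \<in> T\<close> bdd by (rule cSup_upper)
  have beyond_m: "P a c" if "m \<le> c" "c \<le> b" "c < m + \<delta>" for c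
    using trans[of a c0 c] \<delta>[of c0 c] \<open>c0 \<in> T\<close> \<open>m - \<delta> < c0\<close> \<open>c0 \<le> m\<close> that ab
    by (auto simp: T_def)
  have "min b (m + \<delta> / 2) \<in> T"
    using beyond_m[of "min b (m + \<delta> / 2)"] m \<open>\<delta> > 0\<close> ab by (auto simp: T_def)
  then have "min b (m + \<delta> / 2) \<le> m"
    unfolding m_def using bdd by (rule cSup_upper)
  then have "m = b"
    using m \<open>\<delta> > 0\<close> by linarith
  then show ?thesis
    using beyond_m[of b] \<open>\<delta> > 0\<close> by simp
qed

lemma uniform_pointwise_contraction_ball:
  assumes "uniform_pointwise_contraction UNIV F \<beta>"
  obtains r where "r > 0" "\<And>y. dist x y < r \<Longrightarrow> hausdorff_dist (F x) (F y) \<le> \<beta> * dist x y"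
proof -
  obtain N where "open N" "x \<in> N" "\<forall>y\<in>N. hausdorff_dist (F x) (F y) \<le> \<beta> * dist x y"
    using assms unfolding uniform_pointwise_contraction_def by auto
  moreover obtain r where "r > 0" "ball x r \<subseteq> N"
    using \<open>open N\<close> \<open>x \<in> N\<close> open_contains_ball by blast
  ultimately show ?thesis
    using that[of r] by (auto simp: subset_iff)
qed

definition controlled :: "(real \<Rightarrow> 'a::metric_space) \<Rightarrow> real \<Rightarrow> (real \<Rightarrow> real \<Rightarrow> real) \<Rightarrow> bool" where
  "controlled \<gamma> c \<omega> \<longleftrightarrow> (\<forall>a b. 0 \<le> a \<longrightarrow> a \<le> b \<longrightarrow> b \<le> 1 \<longrightarrow> dist (\<gamma> a) (\<gamma> b) \<le> c * \<omega> a b)"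

locale control_function =
  fixes \<omega> :: "real \<Rightarrow> real \<Rightarrow> real"
  assumes superadditive: "\<And>a b c. 0 \<le> a \<Longrightarrow> a \<le> b \<Longrightarrow> b \<le> c \<Longrightarrow> c \<le> 1 \<Longrightarrow> \<omega> a b + \<omega> b c \<le> \<omega> a c"
    and right_vanishing: "\<And>s e. 0 \<le> s \<Longrightarrow> s \<le> 1 \<Longrightarrow> 0 < e \<Longrightarrow>
      \<exists>\<delta>>0. \<forall>t. s < t \<longrightarrow> t < s + \<delta> \<longrightarrow> t \<le> 1 \<longrightarrow> \<omega> s t < e"
    and left_vanishing: "\<And>s e. 0 \<le> s \<Longrightarrow> s \<le> 1 \<Longrightarrow> 0 < e \<Longrightarrow>
      \<exists>\<delta>>0. \<forall>t. s - \<delta> < t \<longrightarrow> t < s \<longrightarrow> 0 \<le> t \<longrightarrow> \<omega> t s < e"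
begin

lemma continuous_on_if_controlled:
  assumes "controlled \<gamma> c \<omega>" "0 \<le> c"
  shows "continuous_on {0..1} \<gamma>"
  unfolding continuous_on_iff
proof (intro ballI allI impI)
  fix s e :: real assume "s \<in> {0..1}" "0 < e"
  define e' where "e' = e / (c + 1)"
  have "0 < e'" "c * e' < e"
    using \<open>0 < e\<close> \<open>0 \<le> c\<close> by (auto simp: e'_def field_simps)
  obtain \<delta>1 where "\<delta>1 > 0" and \<delta>1: "\<And>t. s < t \<Longrightarrow> t < s + \<delta>1 \<Longrightarrow> t \<le> 1 \<Longrightarrow> \<omega> s t < e'"
    using right_vanishing[of s e'] \<open>s \<in> {0..1}\<close> \<open>0 < e'\<close> by auto
  obtain \<delta>2 where "\<delta>2 > 0" and \<delta>2: "\<And>t. s - \<delta>2 < t \<Longrightarrow> t < s \<Longrightarrow> 0 \<le> t \<Longrightarrow> \<omega> t s < e'"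
    using left_vanishing[of s e'] \<open>s \<in> {0..1}\<close> \<open>0 < e'\<close> by auto
  have "dist (\<gamma> t) (\<gamma> s) < e" if "t \<in> {0..1}" "dist t s < min \<delta>1 \<delta>2" for t
  proof (cases t s rule: linorder_cases)
    case less
    then have "dist (\<gamma> t) (\<gamma> s) \<le> c * \<omega> t s"
      using assms(1) that \<open>s \<in> {0..1}\<close> by (simp add: controlled_def)
    also have "\<dots> \<le> c * e'"
      using \<delta>2[of t] less that \<open>0 \<le> c\<close> by (intro mult_left_mono) (auto simp: dist_real_def)
    finally show ?thesis
      using \<open>c * e' < e\<close> by linarith
  next
    case greater
    then have "dist (\<gamma> t) (\<gamma> s) \<le> c * \<omega> s t"
      using assms(1) that \<open>s \<in> {0..1}\<close> by (simp add: controlled_def dist_commute)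
    also have "\<dots> \<le> c * e'"
      using \<delta>1[of t] greater that \<open>0 \<le> c\<close> by (intro mult_left_mono) (auto simp: dist_real_def)
    finally show ?thesis
      using \<open>c * e' < e\<close> by linarith
  qed (use \<open>0 < e\<close> in simp)
  then show "\<exists>d>0. \<forall>t\<in>{0..1}. dist t s < d \<longrightarrow> dist (\<gamma> t) (\<gamma> s) < e"
    using \<open>\<delta>1 > 0\<close> \<open>\<delta>2 > 0\<close> by (intro exI[of _ "min \<delta>1 \<delta>2"]) auto
qed

lemma superadditive_scaled:
  assumes "0 \<le> k" "0 \<le> a" "a \<le> b" "b \<le> d" "d \<le> 1"
  shows "k * \<omega> a b + k * \<omega> b d \<le> k * \<omega> a d"
  using mult_left_mono[OF superadditive[OF assms(2-5)] assms(1)] by (simp add: distrib_left)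

lemma hausdorff_dist_along_controlled_path_locally:
  fixes F :: "'a::metric_space \<Rightarrow> 'a set"
  assumes F: "\<And>x. F x \<noteq> {} \<and> compact (F x)"
    and "0 \<le> \<beta>" "uniform_pointwise_contraction UNIV F \<beta>"
    and "controlled \<gamma> c \<omega>" "0 \<le> c"
    and "0 \<le> s" "s \<le> 1"
  shows "\<exists>\<delta>>0. \<forall>a b. 0 \<le> a \<longrightarrow> a \<le> s \<longrightarrow> s \<le> b \<longrightarrow> b \<le> 1 \<longrightarrow> s - a < \<delta> \<longrightarrow> b - s < \<delta> \<longrightarrow>
      hausdorff_dist (F (\<gamma> a)) (F (\<gamma> b)) \<le> \<beta> * c * \<omega> a b"
proof -
  obtain r where "r > 0" and r: "\<And>y. dist (\<gamma> s) y < r \<Longrightarrow> hausdorff_dist (F (\<gamma> s)) (F y) \<le> \<beta> * dist (\<gamma> s) y"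
    using uniform_pointwise_contraction_ball assms(3) by blast
  have "continuous_on {0..1} \<gamma>"
    using continuous_on_if_controlled assms(4,5) by blast
  then obtain \<delta> where "\<delta> > 0" and \<delta>: "\<And>t. t \<in> {0..1} \<Longrightarrow> dist t s < \<delta> \<Longrightarrow> dist (\<gamma> t) (\<gamma> s) < r"
    using \<open>r > 0\<close> \<open>0 \<le> s\<close> \<open>s \<le> 1\<close> unfolding continuous_on_iff by (metis atLeastAtMost_iff)
  have "hausdorff_dist (F (\<gamma> a)) (F (\<gamma> b)) \<le> \<beta> * c * \<omega> a b"
    if "0 \<le> a" "a \<le> s" "s \<le> b" "b \<le> 1" "s - a < \<delta>" "b - s < \<delta>" for a b
  proof -
    have ctrl: "dist (\<gamma> a) (\<gamma> s) \<le> c * \<omega> a s" "dist (\<gamma> s) (\<gamma> b) \<le> c * \<omega> s b"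
      using assms(4) that \<open>s \<le> 1\<close> unfolding controlled_def by auto
    have "hausdorff_dist (F (\<gamma> a)) (F (\<gamma> b)) \<le> hausdorff_dist (F (\<gamma> s)) (F (\<gamma> a)) + hausdorff_dist (F (\<gamma> s)) (F (\<gamma> b))"
      using hausdorff_dist_triangle[of "F (\<gamma> a)" "F (\<gamma> s)" "F (\<gamma> b)"] F by (simp add: hausdorff_dist_commute)
    also have "\<dots> \<le> \<beta> * dist (\<gamma> a) (\<gamma> s) + \<beta> * dist (\<gamma> s) (\<gamma> b)"
      using r \<delta> that by (intro add_mono) (auto simp: dist_real_def dist_commute)
    also have "\<dots> \<le> \<beta> * c * \<omega> a s + \<beta> * c * \<omega> s b"
      using ctrl \<open>0 \<le> \<beta>\<close> by (simp add: add_mono mult_left_mono mult.assoc)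
    also have "\<dots> \<le> \<beta> * c * \<omega> a b"
      using superadditive_scaled that \<open>0 \<le> \<beta>\<close> \<open>0 \<le> c\<close> by simp
    finally show ?thesis .
  qed
  then show ?thesis
    using \<open>\<delta> > 0\<close> by blast
qed

lemma hausdorff_dist_along_controlled_path:
  fixes F :: "'a::metric_space \<Rightarrow> 'a set"
  assumes F: "\<And>x. F x \<noteq> {} \<and> compact (F x)"
    and "0 \<le> \<beta>" "uniform_pointwise_contraction UNIV F \<beta>"
    and "controlled \<gamma> c \<omega>" "0 \<le> c"
    and "0 \<le> a" "a \<le> b" "b \<le> 1"
  shows "hausdorff_dist (F (\<gamma> a)) (F (\<gamma> b)) \<le> \<beta> * c * \<omega> a b"
proof (rule unit_interval_induction[where P = "\<lambda>a b. hausdorff_dist (F (\<gamma> a)) (F (\<gamma> b)) \<le> \<beta> * c * \<omega> a b",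
      OF _ _ assms(6-8)])
  fix a b d :: real
  assume "0 \<le> a" "a \<le> b" "b \<le> d" "d \<le> 1"
    and "hausdorff_dist (F (\<gamma> a)) (F (\<gamma> b)) \<le> \<beta> * c * \<omega> a b"
    and "hausdorff_dist (F (\<gamma> b)) (F (\<gamma> d)) \<le> \<beta> * c * \<omega> b d"
  then show "hausdorff_dist (F (\<gamma> a)) (F (\<gamma> d)) \<le> \<beta> * c * \<omega> a d"
    using hausdorff_dist_triangle[of "F (\<gamma> a)" "F (\<gamma> b)" "F (\<gamma> d)"] F
      superadditive_scaled[of "\<beta> * c" a b d] \<open>0 \<le> \<beta>\<close> \<open>0 \<le> c\<close> by simp
next
  fix s :: real
  assume "0 \<le> s" "s \<le> 1"
  then show "\<exists>\<delta>>0. \<forall>a b. 0 \<le> a \<longrightarrow> a \<le> s \<longrightarrow> s \<le> b \<longrightarrow> b \<le> 1 \<longrightarrow> s - a < \<delta> \<longrightarrow> b - s < \<delta> \<longrightarrow>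
      hausdorff_dist (F (\<gamma> a)) (F (\<gamma> b)) \<le> \<beta> * c * \<omega> a b"
    by (rule hausdorff_dist_along_controlled_path_locally[OF assms(1-5)])
qed

lemma near_point_along_controlled_path:
  fixes F :: "'a::metric_space \<Rightarrow> 'a set"
  assumes F: "\<And>x. F x \<noteq> {} \<and> compact (F x)"
    and "0 \<le> \<beta>" "uniform_pointwise_contraction UNIV F \<beta>"
    and "controlled \<gamma> c \<omega>" "0 \<le> c"
    and "0 \<le> a" "a \<le> b" "b \<le> 1" "x \<in> F (\<gamma> a)"
  obtains y where "y \<in> F (\<gamma> b)" "dist x y \<le> \<beta> * c * \<omega> a b"
proof -
  obtain y where "y \<in> F (\<gamma> b)" "dist x y \<le> hausdorff_dist (F (\<gamma> a)) (F (\<gamma> b))"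
    using hausdorff_dist_nearest_point[of "F (\<gamma> a)" "F (\<gamma> b)" x] F \<open>x \<in> F (\<gamma> a)\<close> by blast
  moreover have "hausdorff_dist (F (\<gamma> a)) (F (\<gamma> b)) \<le> \<beta> * c * \<omega> a b"
    by (rule hausdorff_dist_along_controlled_path[OF assms(1-8)])
  ultimately show ?thesis
    using that by force
qed

lemma controlled_selection:
  fixes F :: "'a::metric_space \<Rightarrow> 'a set"
  assumes F: "\<And>x. F x \<noteq> {} \<and> compact (F x)"
    and "0 \<le> \<beta>" "uniform_pointwise_contraction UNIV F \<beta>"
    and "controlled \<gamma> c \<omega>" "0 \<le> c" "u \<in> F (\<gamma> 0)"
  obtains \<gamma>' where "controlled \<gamma>' (\<beta> * c) \<omega>" "\<gamma>' 0 = u" "\<forall>s\<in>{0..1}. \<gamma>' s \<in> F (\<gamma> s)"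
proof -
  have approx: "\<exists>y\<in>F (\<gamma> b). dist x y \<le> \<beta> * c * \<omega> a b"
    if "a \<in> {0..1}" "b \<in> {0..1}" "a \<le> b" "x \<in> F (\<gamma> a)" for a b x
    using near_point_along_controlled_path[OF assms(1-5), of a b x] that by auto
  have superadd: "\<beta> * c * \<omega> a b + \<beta> * c * \<omega> b d \<le> \<beta> * c * \<omega> a d"
    if "a \<in> {0..1}" "b \<in> {0..1}" "d \<in> {0..1}" "a \<le> b" "b \<le> d" for a b d
    using superadditive_scaled[of "\<beta> * c" a b d] that \<open>0 \<le> \<beta>\<close> \<open>0 \<le> c\<close> by simp
  obtain f where f: "f 0 = u" "\<forall>s\<in>{0..1}. f s \<in> F (\<gamma> s)"
    "\<forall>a\<in>{0..1}. \<forall>b\<in>{0..1}. a \<le> b \<longrightarrow> dist (f a) (f b) \<le> \<beta> * c * \<omega> a b"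
    using ordered_selection_through[where I = "{0..1}" and G = "\<lambda>s. F (\<gamma> s)"
        and K = "\<lambda>a b. \<beta> * c * \<omega> a b" and i\<^sub>0 = 0 and u = u, OF F approx superadd]
      \<open>u \<in> F (\<gamma> 0)\<close> by auto
  show ?thesis
  proof
    show "controlled f (\<beta> * c) \<omega>"
      using f(3) by (simp add: controlled_def)
  qed (use f(1,2) in auto)
qed

lemma orbit_with_geometric_steps:
  fixes F :: "'a::metric_space \<Rightarrow> 'a set"
  assumes F: "\<And>x. F x \<noteq> {} \<and> compact (F x)"
    and "0 \<le> \<beta>" "uniform_pointwise_contraction UNIV F \<beta>"
    and "controlled p 1 \<omega>" "p 1 \<in> F (p 0)"
  obtains x where "\<And>n. x (Suc n) \<in> F (x n)" "\<And>n. dist (x n) (x (Suc n)) \<le> \<omega> 0 1 * \<beta> ^ n"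
proof -
  have "\<exists>g. \<forall>n. (controlled (g n) (\<beta> ^ n) \<omega> \<and> g n 1 \<in> F (g n 0)) \<and> g (Suc n) 0 = g n 1"
  proof (rule dependent_nat_choice)
    show "\<exists>\<gamma>. controlled \<gamma> (\<beta> ^ 0) \<omega> \<and> \<gamma> 1 \<in> F (\<gamma> 0)"
      using assms(4,5) by auto
  next
    fix \<gamma> n
    assume \<gamma>: "controlled \<gamma> (\<beta> ^ n) \<omega> \<and> \<gamma> 1 \<in> F (\<gamma> 0)"
    obtain \<gamma>' where "controlled \<gamma>' (\<beta> * \<beta> ^ n) \<omega>" "\<gamma>' 0 = \<gamma> 1" "\<forall>s\<in>{0..1}. \<gamma>' s \<in> F (\<gamma> s)"
      using controlled_selection[OF F assms(2,3) conjunct1[OF \<gamma>] zero_le_power[OF \<open>0 \<le> \<beta>\<close>] conjunct2[OF \<gamma>]] .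
    then show "\<exists>\<gamma>'. (controlled \<gamma>' (\<beta> ^ Suc n) \<omega> \<and> \<gamma>' 1 \<in> F (\<gamma>' 0)) \<and> \<gamma>' 0 = \<gamma> 1"
      by auto
  qed
  then obtain g where g: "\<And>n. controlled (g n) (\<beta> ^ n) \<omega>" "\<And>n. g n 1 \<in> F (g n 0)"
    "\<And>n. g (Suc n) 0 = g n 1"
    by blast
  show ?thesis
  proof
    show "g (Suc n) 0 \<in> F (g n 0)" for n
      using g(2,3) by simp
    show "dist (g n 0) (g (Suc n) 0) \<le> \<omega> 0 1 * \<beta> ^ n" for n
      using g(1)[of n] g(3)[of n] by (simp add: controlled_def mult.commute)
  qed
qed

end

section \<open>Variation of a path\<close>

fun list_variation :: "(real \<Rightarrow> 'a::metric_space) \<Rightarrow> real list \<Rightarrow> real" where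
  "list_variation p (x # y # xs) = dist (p x) (p y) + list_variation p (y # xs)"
| "list_variation p _ = 0"

definition subdivision :: "real \<Rightarrow> real \<Rightarrow> real list \<Rightarrow> bool" where
  "subdivision a b xs \<longleftrightarrow> xs \<noteq> [] \<and> hd xs = a \<and> last xs = b \<and> sorted_wrt (<) xs"

definition variation :: "(real \<Rightarrow> 'a::metric_space) \<Rightarrow> real \<Rightarrow> real \<Rightarrow> real" where
  "variation p a b = Sup (list_variation p ` Collect (subdivision a b))"

lemma list_variation_nonneg: "0 \<le> list_variation p xs"
  by (induction p xs rule: list_variation.induct) auto

lemma list_variation_Cons: "ys \<noteq> [] \<Longrightarrow> list_variation p (x # ys) = dist (p x) (p (hd ys)) + list_variation p ys"
  by (cases ys) auto

lemma list_variation_append: "list_variation p (xs @ y # ys) = list_variation p (xs @ [y]) + list_variation p (y # ys)"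
proof (induction xs)
  case (Cons x xs)
  then show ?case by (cases xs) auto
qed simp

lemma list_variation_snoc:
  assumes "ys \<noteq> []"
  shows "list_variation p (ys @ [x]) = list_variation p ys + dist (p (last ys)) (p x)"
proof -
  have "ys @ [x] = butlast ys @ [last ys, x]"
    using assms by (metis append_butlast_last_id append.assoc append_Cons append_Nil)
  then have "list_variation p (ys @ [x]) = list_variation p (butlast ys @ [last ys]) + list_variation p [last ys, x]"
    by (simp only: list_variation_append[of p "butlast ys" "last ys" "[x]"])
  then show ?thesis
    using assms by simp
qed

lemma subdivision_bounds:
  assumes "subdivision a b xs" "x \<in> set xs"
  shows "a \<le> x" "x \<le> b"
proof -
  obtain ys where "xs = a # ys"
    using assms(1) unfolding subdivision_def by (cases xs) auto
  then show "a \<le> x"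
    using assms unfolding subdivision_def by auto
  obtain zs where "xs = zs @ [b]"
    using assms(1) unfolding subdivision_def by (metis append_butlast_last_id)
  then show "x \<le> b"
    using assms unfolding subdivision_def by (auto simp: sorted_wrt_append)
qed

lemma subdivision_append:
  assumes "subdivision a b xs" "subdivision b c ys"
  shows "subdivision a c (xs @ tl ys)" "list_variation p (xs @ tl ys) = list_variation p xs + list_variation p ys"
proof -
  obtain ys' where ys: "ys = b # ys'"
    using assms(2) unfolding subdivision_def by (cases ys) auto
  obtain xs' where xs: "xs = xs' @ [b]"
    using assms(1) unfolding subdivision_def by (metis append_butlast_last_id)
  have "x < y" if "x \<in> set xs" "y \<in> set ys'" for x y
    using subdivision_bounds(2)[OF assms(1) that(1)] assms(2) ys that(2)
    by (auto simp: subdivision_def)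
  then show "subdivision a c (xs @ tl ys)"
    using assms ys unfolding subdivision_def by (auto simp: sorted_wrt_append)
  show "list_variation p (xs @ tl ys) = list_variation p xs + list_variation p ys"
    using list_variation_append[of p xs' b ys'] xs ys by simp
qed

lemma subdivision_segment:
  assumes "a \<le> b"
  obtains xs where "subdivision a b xs" "list_variation p xs = dist (p a) (p b)"
proof (cases "a = b")
  case True
  then show ?thesis
    using that[of "[a]"] by (simp add: subdivision_def)
next
  case False
  then show ?thesis
    using that[of "[a, b]"] assms by (simp add: subdivision_def)
qed

lemma list_variation_in_variation_sums:
  assumes "subdivision 0 1 xs"
  shows "list_variation p xs \<in> variation_sums p"
proof -
  define n where "n = length xs - 1"
  have len: "length xs = Suc n"
    using assms unfolding subdivision_def n_def by (cases xs) auto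
  have "is_partition (\<lambda>i. xs ! i) n"
    using assms len unfolding is_partition_def subdivision_def
    by (auto simp: hd_conv_nth last_conv_nth sorted_wrt_iff_nth_less)
  moreover have "list_variation p xs = (\<Sum>i\<in>{1..n}. dist (p (xs ! (i - 1))) (p (xs ! i)))"
  proof -
    have "list_variation p xs = (\<Sum>i<length xs - 1. dist (p (xs ! i)) (p (xs ! Suc i)))" for xs
      by (induction p xs rule: list_variation.induct) (simp_all del: sum.lessThan_Suc add: sum.lessThan_Suc_shift)
    then show ?thesis
      unfolding n_def by (simp add: sum.atLeast1_atMost_eq)
  qed
  ultimately show ?thesis
    unfolding variation_sums_def by blast
qed

lemma variation_le:
  assumes "a \<le> b" "\<And>xs. subdivision a b xs \<Longrightarrow> list_variation p xs \<le> z"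
  shows "variation p a b \<le> z"
  unfolding variation_def
proof (rule cSup_least)
  show "list_variation p ` Collect (subdivision a b) \<noteq> {}"
    using subdivision_segment[OF assms(1)] by blast
qed (use assms(2) in auto)

lemma near_optimal_subdivision:
  assumes "a \<le> b" "0 < e"
  obtains xs where "subdivision a b xs" "variation p a b - e < list_variation p xs"
proof -
  have "list_variation p ` Collect (subdivision a b) \<noteq> {}"
    using subdivision_segment[OF assms(1)] by blast
  moreover have "variation p a b - e < Sup (list_variation p ` Collect (subdivision a b))"
    using \<open>0 < e\<close> by (simp add: variation_def)
  ultimately have "\<exists>v\<in>list_variation p ` Collect (subdivision a b). variation p a b - e < v"
    by (rule less_cSupD)
  then obtain xs where "subdivision a b xs" "variation p a b - e < list_variation p xs"
    by blast
  then show ?thesis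
    by (rule that)
qed

(* Without this assumption variation p a b is the junk value of Sup on an unbounded set. *)
context
  fixes p :: "real \<Rightarrow> 'a::metric_space"
  assumes bounded: "bdd_above (list_variation p ` Collect (subdivision 0 1))"
begin

lemma list_variation_le_variation:
  assumes "0 \<le> a" "a \<le> b" "b \<le> 1" "subdivision a b xs"
  shows "list_variation p xs \<le> variation p a b"
  unfolding variation_def
proof (rule cSup_upper)
  show "list_variation p xs \<in> list_variation p ` Collect (subdivision a b)"
    using assms(4) by blast
  obtain ys zs where ys: "subdivision 0 a ys" and zs: "subdivision b 1 zs"
    using subdivision_segment assms by metis
  have "list_variation p ys + list_variation p xs' + list_variation p zs \<le> Sup (list_variation p ` Collect (subdivision 0 1))"
    if "subdivision a b xs'" for xs'
  proof -
    have "subdivision 0 1 ((ys @ tl xs') @ tl zs)"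
      using subdivision_append(1)[OF subdivision_append(1)[OF ys that] zs] .
    then have "list_variation p ((ys @ tl xs') @ tl zs) \<le> Sup (list_variation p ` Collect (subdivision 0 1))"
      using bounded by (intro cSup_upper) auto
    then show ?thesis
      using subdivision_append(2)[OF subdivision_append(1)[OF ys that] zs, of p]
        subdivision_append(2)[OF ys that, of p] by linarith
  qed
  then show "bdd_above (list_variation p ` Collect (subdivision a b))"
    using list_variation_nonneg[of p ys] list_variation_nonneg[of p zs]
    by (intro bdd_aboveI[of _ "Sup (list_variation p ` Collect (subdivision 0 1))"]) force
qed

lemma dist_le_variation: "0 \<le> a \<Longrightarrow> a \<le> b \<Longrightarrow> b \<le> 1 \<Longrightarrow> dist (p a) (p b) \<le> variation p a b"
  by (metis list_variation_le_variation subdivision_segment)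

lemma variation_superadditive:
  assumes "0 \<le> a" "a \<le> b" "b \<le> c" "c \<le> 1"
  shows "variation p a b + variation p b c \<le> variation p a c"
proof -
  have "list_variation p xs + list_variation p ys \<le> variation p a c"
    if "subdivision a b xs" "subdivision b c ys" for xs ys
    using list_variation_le_variation[OF _ _ _ subdivision_append(1)[OF that]]
      subdivision_append(2)[OF that, of p] assms by simp
  then have "list_variation p xs \<le> variation p a c - variation p b c" if "subdivision a b xs" for xs
    using variation_le[of b c p "variation p a c - list_variation p xs"] assms that by force
  then have "variation p a b \<le> variation p a c - variation p b c"
    using variation_le[of a b p] assms by blast
  then show ?thesis
    by simp
qed

lemma variation_right_vanishing:
  assumes "continuous_on {0..1} p" "0 \<le> s" "s \<le> 1" "0 < e"
  shows "\<exists>\<delta>>0. \<forall>t. s < t \<longrightarrow> t < s + \<delta> \<longrightarrow> t \<le> 1 \<longrightarrow> variation p s t < e"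
proof (cases "s = 1")
  case False
  \<comment> \<open>Insert \<open>t\<close> into a nearly optimal subdivision of \<open>[s, 1]\<close>, before its second point.\<close>
  obtain xs where xs: "subdivision s 1 xs" "variation p s 1 - e / 2 < list_variation p xs"
    using near_optimal_subdivision[of s 1 "e / 2" p] assms by auto
  obtain ys where ys: "xs = s # ys"
    using xs(1) unfolding subdivision_def by (cases xs) auto
  moreover have "ys \<noteq> []"
    using xs(1) False ys unfolding subdivision_def by auto
  ultimately have "s < hd ys" "subdivision (hd ys) 1 ys"
    using xs(1) unfolding subdivision_def by auto
  obtain d where "d > 0" and d: "\<And>t. t \<in> {0..1} \<Longrightarrow> dist t s < d \<Longrightarrow> dist (p t) (p s) < e / 2"
    using assms \<open>0 < e\<close> unfolding continuous_on_iff by (metis atLeastAtMost_iff half_gt_zero)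
  have "variation p s t < e" if t: "s < t" "t < s + min d (hd ys - s)" "t \<le> 1" for t
  proof -
    have "subdivision t 1 (t # ys)"
      using \<open>subdivision (hd ys) 1 ys\<close> t unfolding subdivision_def by (cases ys) auto
    have "list_variation p zs \<le> dist (p s) (p t) + e / 2" if "subdivision s t zs" for zs
    proof -
      have "list_variation p zs + list_variation p (t # ys) \<le> variation p s 1"
        using list_variation_le_variation[OF _ _ _ subdivision_append(1)[OF that \<open>subdivision t 1 (t # ys)\<close>]]
          subdivision_append(2)[OF that \<open>subdivision t 1 (t # ys)\<close>, of p] assms t by simp
      moreover have "dist (p s) (p (hd ys)) \<le> dist (p s) (p t) + dist (p t) (p (hd ys))"
        by (rule dist_triangle)
      ultimately show ?thesis
        using xs(2)[unfolded ys] list_variation_Cons[OF \<open>ys \<noteq> []\<close>, of p s]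
          list_variation_Cons[OF \<open>ys \<noteq> []\<close>, of p t] by linarith
    qed
    then have "variation p s t \<le> dist (p s) (p t) + e / 2"
      using t by (intro variation_le) auto
    moreover have "dist (p s) (p t) < e / 2"
      using d[of t] t assms by (simp add: dist_real_def dist_commute)
    ultimately show ?thesis
      by simp
  qed
  then show ?thesis
    using \<open>d > 0\<close> \<open>s < hd ys\<close> by (intro exI[of _ "min d (hd ys - s)"]) auto
qed (intro exI[of _ 1], auto)

lemma variation_left_vanishing:
  assumes "continuous_on {0..1} p" "0 \<le> s" "s \<le> 1" "0 < e"
  shows "\<exists>\<delta>>0. \<forall>t. s - \<delta> < t \<longrightarrow> t < s \<longrightarrow> 0 \<le> t \<longrightarrow> variation p t s < e"
proof (cases "s = 0")
  case False
  \<comment> \<open>Insert \<open>t\<close> into a nearly optimal subdivision of \<open>[0, s]\<close>, after its penultimate point.\<close>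
  obtain xs where xs: "subdivision 0 s xs" "variation p 0 s - e / 2 < list_variation p xs"
    using near_optimal_subdivision[of 0 s "e / 2" p] assms by auto
  obtain ys where ys: "xs = ys @ [s]"
    using xs(1) unfolding subdivision_def by (metis append_butlast_last_id)
  moreover have "ys \<noteq> []"
    using xs(1) False ys unfolding subdivision_def by auto
  ultimately have "last ys < s" "subdivision 0 (last ys) ys"
    using xs(1) unfolding subdivision_def by (auto simp: sorted_wrt_append)
  obtain d where "d > 0" and d: "\<And>t. t \<in> {0..1} \<Longrightarrow> dist t s < d \<Longrightarrow> dist (p t) (p s) < e / 2"
    using assms \<open>0 < e\<close> unfolding continuous_on_iff by (metis atLeastAtMost_iff half_gt_zero)
  have "variation p t s < e" if t: "s - min d (s - last ys) < t" "t < s" "0 \<le> t" for t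
  proof -
    have "last ys < t"
      using t(1) min.cobounded2[of d "s - last ys"] by linarith
    then have "subdivision 0 t (ys @ [t])"
      using \<open>subdivision 0 (last ys) ys\<close> subdivision_bounds(2)[OF \<open>subdivision 0 (last ys) ys\<close>] t
      unfolding subdivision_def by (auto simp: sorted_wrt_append intro: le_less_trans)
    have "list_variation p zs \<le> dist (p s) (p t) + e / 2" if "subdivision t s zs" for zs
    proof -
      have "list_variation p (ys @ [t]) + list_variation p zs \<le> variation p 0 s"
        using list_variation_le_variation[OF _ _ _ subdivision_append(1)[OF \<open>subdivision 0 t (ys @ [t])\<close> that]]
          subdivision_append(2)[OF \<open>subdivision 0 t (ys @ [t])\<close> that, of p] assms by simp
      moreover have "dist (p (last ys)) (p s) \<le> dist (p (last ys)) (p t) + dist (p s) (p t)"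
        by (rule dist_triangle2)
      ultimately show ?thesis
        using xs(2)[unfolded ys] list_variation_snoc[OF \<open>ys \<noteq> []\<close>, of p s]
          list_variation_snoc[OF \<open>ys \<noteq> []\<close>, of p t] by linarith
    qed
    then have "variation p t s \<le> dist (p s) (p t) + e / 2"
      using t by (intro variation_le) auto
    moreover have "dist (p s) (p t) < e / 2"
      using d[of t] t assms by (simp add: dist_real_def dist_commute)
    ultimately show ?thesis
      by simp
  qed
  then show ?thesis
    using \<open>d > 0\<close> \<open>last ys < s\<close> by (intro exI[of _ "min d (s - last ys)"]) auto
qed (intro exI[of _ 1], auto)

lemma control_function_variation:
  assumes "continuous_on {0..1} p"
  shows "control_function (variation p)"
  using variation_superadditive variation_right_vanishing[OF assms] variation_left_vanishing[OF assms]
  by unfold_locales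

end

lemma bdd_above_list_variation_if_path_length_finite:
  assumes "path_length p < \<infinity>"
  shows "bdd_above (list_variation p ` Collect (subdivision 0 1))"
proof -
  have le: "ereal v \<le> path_length p" if "v \<in> variation_sums p" for v
    unfolding path_length_def using that by (rule SUP_upper)
  obtain xs where "subdivision 0 1 xs"
    using subdivision_segment[of 0 1] by auto
  then obtain B where B: "path_length p = ereal B"
    using assms le[OF list_variation_in_variation_sums] by (cases "path_length p") auto
  show ?thesis
    using le[OF list_variation_in_variation_sums] unfolding B by (intro bdd_aboveI[of _ B]) auto
qed

section \<open>The fixed point\<close>

lemma Cauchy_if_dist_Suc_le_geometric:
  fixes x :: "nat \<Rightarrow> 'a::metric_space"
  assumes "0 \<le> \<beta>" "\<beta> < 1" and step: "\<And>n. dist (x n) (x (Suc n)) \<le> W * \<beta> ^ n"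
  shows "Cauchy x"
proof -
  have "0 \<le> W"
    using order_trans[OF zero_le_dist step[of 0]] by simp
  have tail: "dist (x m) (x (m + k)) \<le> W * \<beta> ^ m / (1 - \<beta>)" for m k
  proof -
    have "dist (x m) (x (m + k)) \<le> (\<Sum>i<k. W * \<beta> ^ (m + i))"
    proof (induction k)
      case (Suc k)
      have "dist (x m) (x (m + Suc k)) \<le> dist (x m) (x (m + k)) + dist (x (m + k)) (x (Suc (m + k)))"
        by (simp add: dist_triangle)
      then show ?case
        using Suc step[of "m + k"] by simp
    qed simp
    also have "\<dots> = W * \<beta> ^ m * (\<Sum>i<k. \<beta> ^ i)"
      by (simp add: sum_distrib_left power_add mult.assoc)
    also have "\<dots> \<le> W * \<beta> ^ m * (1 / (1 - \<beta>))"
      using sum_le_suminf[of "\<lambda>i. \<beta> ^ i" "{..<k}"] suminf_geometric[of \<beta>] assms(1,2) \<open>0 \<le> W\<close>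
      by (intro mult_left_mono) auto
    finally show ?thesis
      by simp
  qed
  have "(\<lambda>m. W * \<beta> ^ m / (1 - \<beta>)) \<longlonglongrightarrow> 0"
    using assms(1,2) by (intro tendsto_eq_intros LIMSEQ_power_zero) auto
  show ?thesis
    unfolding Cauchy_altdef2
  proof (intro allI impI)
    fix e :: real assume "0 < e"
    then obtain N where N: "W * \<beta> ^ N / (1 - \<beta>) < e"
      using order_tendstoD(2)[OF \<open>(\<lambda>m. W * \<beta> ^ m / (1 - \<beta>)) \<longlonglongrightarrow> 0\<close>] by (auto simp: eventually_sequentially)
    have "dist (x n) (x N) < e" if "n \<ge> N" for n
      using tail[of N "n - N"] N that by (simp add: dist_commute)
    then show "\<exists>N. \<forall>n\<ge>N. dist (x n) (x N) < e"
      by blast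
  qed
qed

lemma limit_of_orbit_is_fixed_point:
  fixes F :: "'a::metric_space \<Rightarrow> 'a set"
  assumes F: "\<And>x. F x \<noteq> {} \<and> compact (F x)" and "uniform_pointwise_contraction UNIV F \<beta>"
    and orbit: "\<And>n. x (Suc n) \<in> F (x n)" and "x \<longlonglongrightarrow> l"
  shows "l \<in> F l"
proof -
  obtain r where "r > 0" and r: "\<And>y. dist l y < r \<Longrightarrow> hausdorff_dist (F l) (F y) \<le> \<beta> * dist l y"
    using uniform_pointwise_contraction_ball assms(2) by blast
  have "infdist l (F l) \<le> dist l (x (Suc n)) + \<beta> * dist l (x n)" if "dist l (x n) < r" for n
  proof -
    have "infdist l (F l) \<le> infdist (x (Suc n)) (F l) + dist l (x (Suc n))"
      by (rule infdist_triangle)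
    also have "infdist (x (Suc n)) (F l) \<le> hausdorff_dist (F (x n)) (F l)"
      using F[of "x n"] orbit[of n] by (intro infdist_le_hausdorff_dist) auto
    also have "\<dots> \<le> \<beta> * dist l (x n)"
      using r[OF that] by (simp add: hausdorff_dist_commute)
    finally show ?thesis
      by simp
  qed
  moreover have "\<forall>\<^sub>F n in sequentially. dist l (x n) < r"
    using tendstoD[OF \<open>x \<longlonglongrightarrow> l\<close> \<open>r > 0\<close>] by (simp add: dist_commute)
  ultimately have "\<forall>\<^sub>F n in sequentially. infdist l (F l) \<le> dist l (x (Suc n)) + \<beta> * dist l (x n)"
    by (simp add: eventually_mono)
  moreover have "(\<lambda>n. dist l (x (Suc n)) + \<beta> * dist l (x n)) \<longlonglongrightarrow> 0"
    using \<open>x \<longlonglongrightarrow> l\<close> LIMSEQ_Suc[OF \<open>x \<longlonglongrightarrow> l\<close>] by (intro tendsto_eq_intros) auto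
  ultimately have "infdist l (F l) \<le> 0"
    by (intro tendsto_lowerbound) auto
  then have "infdist l (F l) = 0"
    using infdist_nonneg[of l "F l"] by linarith
  then show ?thesis
    using in_closed_iff_infdist_zero[of "F l" l] F[of l] compact_imp_closed by blast
qed

theorem proposition14:
  fixes F :: "'a::metric_space \<Rightarrow> 'a set" and \<beta> :: real
  assumes "complete (UNIV :: 'a set)"
    and "rectifiably_path_connected (UNIV :: 'a set)"
    and "\<And>x. F x \<noteq> {} \<and> compact (F x)"
    and "0 \<le> \<beta>" and "\<beta> < 1"
    and "uniform_pointwise_contraction UNIV F \<beta>"
  shows "{x. x \<in> F x} \<noteq> {}"
proof -
  obtain x0 x1 :: 'a where "x1 \<in> F x0"
    using assms(3) by (meson ex_in_conv)
  moreover obtain p where p: "continuous_on {0..1} p" "p 0 = x0" "p 1 = x1" "path_length p < \<infinity>"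
    using assms(2) unfolding rectifiably_path_connected_def by (meson UNIV_I)
  ultimately have "p 1 \<in> F (p 0)"
    by simp
  note bounded = bdd_above_list_variation_if_path_length_finite[OF p(4)]
  interpret control_function "variation p"
    using control_function_variation[OF bounded p(1)] .
  have "controlled p 1 (variation p)"
    using dist_le_variation[OF bounded] by (simp add: controlled_def)
  then obtain x where x: "\<And>n. x (Suc n) \<in> F (x n)" "\<And>n. dist (x n) (x (Suc n)) \<le> variation p 0 1 * \<beta> ^ n"
    using orbit_with_geometric_steps[OF assms(3,4,6) _ \<open>p 1 \<in> F (p 0)\<close>] by blast
  have "Cauchy x"
    using assms(4,5) x(2) by (rule Cauchy_if_dist_Suc_le_geometric)
  then obtain l where "x \<longlonglongrightarrow> l"
    using assms(1) by (blast elim: completeE)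
  then have "l \<in> F l"
    by (rule limit_of_orbit_is_fixed_point[of F \<beta> x, OF assms(3,6) x(1)])
  then show ?thesis
    by blast
qed

end
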